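(* For every positive integer $k$, $$W(k+1,2)=\frac{\pi}{2^k}\,\bar t(k)-\bar T(1,k).$$
   Context: $\bar t(k):=\sum_{n\ge1}\frac{(-1)^{n-1}}{(n-1/2)^k}$. For positive integers $k_1,k_2$, $\bar T(k_1,k_2):=4\sum_{0<n_1<n_2}\frac{(-1)^{n_2}}{(2n_1-1)^{k_1}(2n_2-2)^{k_2}}$, and $W(K,2):=\sum_{k_1+k_2=K,\,k_1,k_2\ge1}\bar T(k_1,k_2)$. *)

theory Defs
  imports "HOL-Analysis.Analysis"
begin

definition tbar :: "nat \<Rightarrow> real" where
  "tbar k = (\<Sum>n. (-1) ^ n / (real (Suc n) - 1/2) ^ k)"

text \<open>Tbar k1 k2 = 4 * sum over 0 < n1 < n2 of (-1)^n2 / ((2 n1 - 1)^k1 (2 n2 - 2)^k2),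
  read as an iterated sum: outer sum over n2 >= 2, inner finite sum over 1 <= n1 < n2.\<close>
definition Tbar :: "nat \<Rightarrow> nat \<Rightarrow> real" where
  "Tbar k1 k2 = 4 * (\<Sum>m. (let n2 = m + 2 in
      (-1) ^ n2 / (2 * real n2 - 2) ^ k2 *
      (\<Sum>n1 \<in> {1..<n2}. 1 / (2 * real n1 - 1) ^ k1)))"

definition W2 :: "nat \<Rightarrow> real" where
  "W2 K = (\<Sum>k1 \<in> {1..<K}. Tbar k1 (K - k1))"

end

theory Submission
  imports Defs "HOL-Real_Asymp.Real_Asymp"
begin

text \<open>
  Put \<open>b i = (-1)^i / (2i+1)^k\<close>, so that \<open>tbar k = 2^k \<Sum> b\<close>, and multiply Leibniz's series
  \<open>\<pi>/4 = \<Sum> (-1)^j / (2j+1)\<close> by \<open>\<Sum> b\<close> in the sense of Cauchy. With \<open>y = 2n+2\<close> and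
  \<open>x = 2i+1\<close> the \<open>n\<close>-th Cauchy coefficient is \<open>(-1)^n\<close> times the sum over \<open>i \<le> n\<close> of
  \<open>1/(x^k (y-x))\<close>, and the partial fraction expansion
  \<open>1/(x^k (y-x)) = (\<Sum>j=1..k. 1/(y^(k+1-j) x^j)) + 1/(y^k (y-x))\<close>
  splits it into the \<open>n\<close>-th summands of \<open>Tbar j (k+1-j)\<close>, \<open>j = 1..k\<close>, and, after the
  reflection \<open>i \<mapsto> n-i\<close>, of \<open>Tbar 1 k\<close>. Neither factor converges absolutely when \<open>k = 1\<close>,
  so the Cauchy product is controlled by hand: the Leibniz remainders are at most \<open>1/(2m+1)\<close>,
  and the resulting error is at most \<open>harm N / (N+1) \<longrightarrow> 0\<close>.
\<close>

lemma partial_fractions_power_diff: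
  fixes x y :: "'a::field"
  assumes "x \<noteq> 0" "y \<noteq> 0" "x \<noteq> y"
  shows "1 / (x^k * (y - x)) = (\<Sum>j\<in>{1..k}. 1 / (y^(Suc k - j) * x^j)) + 1 / (y^k * (y - x))"
proof (induction k)
  case 0
  show ?case by simp
next
  case (Suc k)
  \<comment> \<open>an opaque name for \<open>y - x\<close> keeps \<open>field_simps\<close> from expanding it\<close>
  obtain d where d: "d = y - x" "d \<noteq> 0"
    using assms by simp
  have "(\<Sum>j\<in>{1..Suc k}. 1 / (y^(Suc (Suc k) - j) * x^j))
      = 1 / (y^Suc k * x) + (\<Sum>j\<in>{1..k}. 1 / (y^(Suc k - j) * x^j)) / x"
    unfolding One_nat_def sum.atLeast1_atMost_eq sum.lessThan_Suc_shift
    by (simp add: sum_divide_distrib mult_ac)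
  also have "\<dots> = 1 / (y^Suc k * x) + (1 / (x^k * d) - 1 / (y^k * d)) / x"
    using Suc.IH d by simp
  also have "\<dots> = 1 / (x^Suc k * d) - 1 / (y^Suc k * d) + (d - y + x) / (x * y^Suc k * d)"
    using assms d(2) by (simp add: field_simps)
  finally show ?case
    using d by simp
qed

lemma Leibniz_remainder_bound:
  fixes a :: "nat \<Rightarrow> real"
  assumes lim: "a \<longlonglongrightarrow> 0" and nonneg: "\<And>n. 0 \<le> a n" and decr: "\<And>n. a (Suc n) \<le> a n"
  shows "\<bar>(\<Sum>i. (-1)^i * a i) - (\<Sum>i<m. (-1)^i * a i)\<bar> \<le> a m"
proof -
  have "(\<lambda>i. a (i + m)) \<longlonglongrightarrow> 0" "\<And>i. 0 \<le> a (i + m)" "\<And>i. a (Suc i + m) \<le> a (i + m)"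
    using LIMSEQ_ignore_initial_segment[OF lim] nonneg decr by simp_all
  note tail = summable_Leibniz'[OF this]
  have "(\<Sum>i. (-1)^i * a i) - (\<Sum>i<m. (-1)^i * a i) = (\<Sum>i. (-1)^(i + m) * a (i + m))"
    using suminf_split_initial_segment[OF summable_Leibniz'(1)[OF lim nonneg decr], of m] by simp
  also have "\<dots> = (-1)^m * (\<Sum>i. (-1)^i * a (i + m))"
    using suminf_mult[OF tail(1), of "(-1)^m"] by (simp add: power_add mult_ac)
  finally show ?thesis
    using tail(2)[of 0] tail(4)[of 0] by (simp add: abs_mult)
qed

lemma LIMSEQ_harm_divide_Suc: "(\<lambda>n. harm n / (real n + 1) :: real) \<longlonglongrightarrow> 0"
proof -
  have "(\<lambda>n. (harm n - ln (real n)) * (1 / (real n + 1)) + ln (real n) / (real n + 1) :: real)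
      \<longlonglongrightarrow> euler_mascheroni * 0 + 0"
    by (intro tendsto_add tendsto_mult euler_mascheroni_LIMSEQ) real_asymp+
  moreover have "(harm n - ln (real n)) * (1 / (real n + 1)) + ln (real n) / (real n + 1)
      = harm n / (real n + 1)" for n
    by (simp add: add_divide_distrib[symmetric])
  ultimately show ?thesis by simp
qed

lemma sum_odd_reciprocal_convolution_le:
  "(\<Sum>i<N. 1 / (2 * real i + 1) * (1 / (2 * real (N - i) + 1))) \<le> harm N / (real N + 1)"
proof -
  have term_le: "1 / (2 * real i + 1) * (1 / (2 * real (N - i) + 1))
      \<le> (1 / real (Suc i) + 1 / real (N - i)) / (2 * real N + 2)" if "i < N" for i
  proof -
    define p q where "p = real i" and "q = real (N - i)"
    have p: "p \<ge> 0" and q: "q \<ge> 1" and N: "real N = p + q"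
      using that by (auto simp: p_def q_def of_nat_diff)
    have "1 / (2 * p + 1) * (1 / (2 * q + 1)) = (1 / (2 * p + 1) + 1 / (2 * q + 1)) / (2 * (p + q) + 2)"
    proof -
      have pos: "2 * p + 1 > 0" "2 * q + 1 > 0" "2 * (p + q) + 2 > 0"
        using p q by (auto simp: distrib_left)
      then have "1 / (2 * p + 1) + 1 / (2 * q + 1) = (2 * (p + q) + 2) / ((2 * p + 1) * (2 * q + 1))"
        by (simp add: field_simps)
      with pos show ?thesis
        by simp
    qed
    also have "\<dots> \<le> (1 / (1 + p) + 1 / q) / (2 * (p + q) + 2)"
      using q by (intro divide_right_mono add_mono) (auto simp: p_def frac_le)
    finally show ?thesis
      by (simp add: p_def q_def N)
  qed
  have "(\<Sum>i<N. 1 / real (N - i)) = (\<Sum>i<N. 1 / real (Suc (N - Suc i)))"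
    by (intro sum.cong) (auto simp: Suc_diff_Suc)
  also have "\<dots> = (\<Sum>i<N. 1 / real (Suc i))"
    by (rule sum.nat_diff_reindex)
  finally have reflect: "(\<Sum>i<N. 1 / real (N - i)) = (\<Sum>i<N. 1 / real (Suc i))" .
  have "(\<Sum>i<N. 1 / (2 * real i + 1) * (1 / (2 * real (N - i) + 1)))
      \<le> (\<Sum>i<N. (1 / real (Suc i) + 1 / real (N - i)) / (2 * real N + 2))"
    by (intro sum_mono term_le) simp
  also have "\<dots> = ((\<Sum>i<N. 1 / real (Suc i)) + (\<Sum>i<N. 1 / real (N - i))) / (2 * real N + 2)"
    by (simp only: sum.distrib flip: sum_divide_distrib)
  also have "\<dots> = 2 * harm N / (2 * real N + 2)"
    unfolding reflect harm_altdef by (simp add: inverse_eq_divide)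
  also have "\<dots> = harm N / (real N + 1)"
    by (simp add: divide_simps)
  finally show ?thesis .
qed

lemma Cauchy_product_sums_remainder_bound:
  fixes a b u v :: "nat \<Rightarrow> real"
  assumes sb: "summable b"
    and rem: "\<And>m. \<bar>A - (\<Sum>j<m. a j)\<bar> \<le> u m"
    and bound: "\<And>i. \<bar>b i\<bar> \<le> v i"
    and conv: "(\<lambda>N. \<Sum>i<N. v i * u (N - i)) \<longlonglongrightarrow> 0"
  shows "(\<lambda>n. \<Sum>i\<le>n. a (n - i) * b i) sums (A * suminf b)"
proof -
  define r where "r m = A - (\<Sum>j<m. a j)" for m
  define E where "E N = (\<Sum>i<N. b i * r (N - i))" for N
  have partial: "(\<Sum>n<N. \<Sum>i\<le>n. a (n - i) * b i) = A * (\<Sum>i<N. b i) - E N" for N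
  proof -
    have "(\<Sum>n<N. \<Sum>i\<le>n. a (n - i) * b i) = (\<Sum>(i, j)\<in>{(i, j). i + j < N}. a j * b i)"
      by (rule sum.triangle_reindex[symmetric])
    also have "\<dots> = (\<Sum>(i, j)\<in>Sigma {..<N} (\<lambda>i. {..<N - i}). a j * b i)"
      by (intro sum.cong) auto
    also have "\<dots> = (\<Sum>i<N. b i * (\<Sum>j<N - i. a j))"
      by (subst sum.Sigma[symmetric]) (auto simp: sum_distrib_left mult_ac)
    also have "\<dots> = A * (\<Sum>i<N. b i) - E N"
      by (simp add: E_def r_def algebra_simps sum_distrib_left sum_subtractf)
    finally show ?thesis .
  qed
  have "E \<longlonglongrightarrow> 0"
  proof (rule Lim_null_comparison[OF always_eventually conv], rule allI)
    fix N
    have "norm (E N) \<le> (\<Sum>i<N. \<bar>b i\<bar> * \<bar>r (N - i)\<bar>)"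
      unfolding E_def real_norm_def abs_mult[symmetric] by (rule sum_abs)
    also have "\<dots> \<le> (\<Sum>i<N. v i * u (N - i))"
      using bound rem order_trans[OF abs_ge_zero bound]
      by (intro sum_mono mult_mono) (auto simp: r_def)
    finally show "norm (E N) \<le> (\<Sum>i<N. v i * u (N - i))" .
  qed
  then have "(\<lambda>N. A * (\<Sum>i<N. b i) - E N) \<longlonglongrightarrow> A * suminf b - 0"
    by (intro tendsto_diff tendsto_mult_left summable_LIMSEQ sb)
  then show ?thesis
    unfolding sums_def partial by simp
qed

lemma Cauchy_product_pi_series_sums:
  fixes b :: "nat \<Rightarrow> real"
  assumes "summable b" "\<And>i. \<bar>b i\<bar> \<le> 1 / (2 * real i + 1)"
  shows "(\<lambda>n. \<Sum>i\<le>n. (-1)^(n - i) / (2 * real (n - i) + 1) * b i) sums (pi / 4 * suminf b)"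
proof (rule Cauchy_product_sums_remainder_bound[where a = "\<lambda>j. (-1)^j / (2 * real j + 1)",
      OF assms(1) _ assms(2)])
  define u where "u j = 1 / (2 * real j + 1)" for j
  have "u \<longlonglongrightarrow> 0"
    unfolding u_def by real_asymp
  moreover have "pi / 4 = (\<Sum>j. (-1)^j * u j)"
    unfolding pi_series u_def by (simp add: mult_ac add.commute)
  ultimately show "\<bar>pi / 4 - (\<Sum>j<m. (-1)^j / (2 * real j + 1))\<bar> \<le> 1 / (2 * real m + 1)" for m
    using Leibniz_remainder_bound[of u m] by (simp add: u_def frac_le)
  show "(\<lambda>N. \<Sum>i<N. 1 / (2 * real i + 1) * (1 / (2 * real (N - i) + 1))) \<longlonglongrightarrow> 0"
  proof (rule Lim_null_comparison[OF always_eventually LIMSEQ_harm_divide_Suc], intro allI)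
    fix N
    have "0 \<le> (\<Sum>i<N. 1 / (2 * real i + 1) * (1 / (2 * real (N - i) + 1)))"
      by (intro sum_nonneg) simp
    then show "norm (\<Sum>i<N. 1 / (2 * real i + 1) * (1 / (2 * real (N - i) + 1))) \<le> harm N / (real N + 1)"
      using sum_odd_reciprocal_convolution_le by (simp only: real_norm_def abs_of_nonneg)
  qed
qed

lemma summable_alternating_odd_power:
  assumes "k \<ge> 1"
  shows "summable (\<lambda>i. (-1)^i / (2 * real i + 1) ^ k)"
proof -
  have "(\<lambda>i. (1 / (2 * real i + 1)) ^ k) \<longlonglongrightarrow> 0"
    using assms by (intro tendsto_null_power) (real_asymp, simp)
  then have "summable (\<lambda>i. (-1)^i * (1 / (2 * real i + 1)) ^ k)"
    by (rule summable_Leibniz'(1)) (auto intro!: power_mono simp: frac_le)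
  then show ?thesis
    by (simp add: power_divide)
qed

definition odd_power_sum :: "nat \<Rightarrow> nat \<Rightarrow> real" where
  "odd_power_sum s m = (\<Sum>i\<le>m. 1 / (2 * real i + 1) ^ s)"

text \<open>\<open>4 * Tbar_summand k1 k2 m\<close> is the term \<open>n2 = m + 2\<close> of \<open>Tbar k1 k2\<close>; its inner index is \<open>n1 = i + 1\<close>.\<close>
definition Tbar_summand :: "nat \<Rightarrow> nat \<Rightarrow> nat \<Rightarrow> real" where
  "Tbar_summand k1 k2 m = (-1)^m / (2 * real m + 2) ^ k2 * odd_power_sum k1 m"

lemma Tbar_eq_suminf: "Tbar k1 k2 = 4 * suminf (Tbar_summand k1 k2)"
proof -
  have inner: "(\<Sum>n1\<in>{1..<m + 2}. 1 / (2 * real n1 - 1) ^ k1) = odd_power_sum k1 m" for m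
    unfolding numeral_2_eq_2 One_nat_def add_Suc_right add_0_right sum.shift_bounds_Suc_ivl
      odd_power_sum_def atLeast0LessThan lessThan_Suc_atMost
    by (simp add: add.commute)
  have "(-1)^(m + 2) / (2 * real (m + 2) - 2) ^ k2 * (\<Sum>n1\<in>{1..<m + 2}. 1 / (2 * real n1 - 1) ^ k1)
      = Tbar_summand k1 k2 m" for m
    unfolding inner Tbar_summand_def by (simp add: add.commute)
  then show ?thesis
    unfolding Tbar_def Let_def by simp
qed

lemma Tbar_summand_altdef:
  "Tbar_summand k1 k2 n = (-1)^n * (\<Sum>i\<le>n. 1 / ((2 * real n + 2) ^ k2 * (2 * real i + 1) ^ k1))"
  unfolding Tbar_summand_def odd_power_sum_def sum_distrib_left by (simp add: mult_ac)

lemma odd_power_sum_ge_one: "1 \<le> odd_power_sum s m"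
proof -
  have "(\<Sum>i\<in>{0}. 1 / (2 * real i + 1) ^ s) \<le> odd_power_sum s m"
    unfolding odd_power_sum_def by (rule sum_mono2) auto
  then show ?thesis by simp
qed

lemma odd_power_sum_le_harm:
  assumes "s \<ge> 1"
  shows "odd_power_sum s m \<le> harm (Suc m)"
proof -
  have "odd_power_sum s m \<le> (\<Sum>i\<le>m. 1 / real (Suc i))"
    unfolding odd_power_sum_def
  proof (rule sum_mono)
    fix i
    have "1 / (2 * real i + 1) ^ s \<le> 1 / (2 * real i + 1) ^ 1"
      using assms by (intro divide_left_mono power_increasing) auto
    also have "\<dots> \<le> 1 / real (Suc i)"
      by (simp add: frac_le)
    finally show "1 / (2 * real i + 1) ^ s \<le> 1 / real (Suc i)" .
  qed
  also have "\<dots> = harm (Suc m)"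
    by (simp add: harm_altdef lessThan_Suc_atMost inverse_eq_divide)
  finally show ?thesis .
qed

lemma Tbar_summand_coefficient_decreasing:
  assumes "k1 \<ge> 1" "k2 \<ge> 1"
  shows "odd_power_sum k1 (Suc m) / (2 * real (Suc m) + 2) ^ k2
    \<le> odd_power_sum k1 m / (2 * real m + 2) ^ k2"
proof -
  define x S e where "x = 2 * real m + 2" and "S = odd_power_sum k1 m"
    and "e = 1 / (2 * real m + 3) ^ k1"
  have x: "x > 0" and S: "S \<ge> 1" and e: "e \<ge> 0"
    using odd_power_sum_ge_one by (auto simp: x_def S_def e_def)
  have "e \<le> 1 / (2 * real m + 3) ^ 1"
    unfolding e_def using assms(1) by (intro divide_left_mono power_increasing) auto
  then have "e * (x + 1) \<le> 1"
    by (simp add: x_def field_simps)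
  then have "e * x \<le> 1"
    using e by (simp add: algebra_simps)
  then have "(S + e) * x \<le> S * (x + 2)"
    using S by (simp add: algebra_simps)
  then have first: "(S + e) / (x + 2) \<le> S / x"
    using x by (simp add: divide_simps)
  have second: "1 / (x + 2) ^ (k2 - 1) \<le> 1 / x ^ (k2 - 1)"
    using x by (intro divide_left_mono power_mono) auto
  have "(S + e) / (x + 2) ^ k2 = (S + e) / (x + 2) * (1 / (x + 2) ^ (k2 - 1))"
    using assms(2) by (cases k2) auto
  also have "\<dots> \<le> S / x * (1 / x ^ (k2 - 1))"
    using first second x S by (intro mult_mono) auto
  also have "\<dots> = S / x ^ k2"
    using assms(2) by (cases k2) auto
  finally show ?thesis
    by (simp add: x_def S_def e_def odd_power_sum_def add.commute add.left_commute)
qed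

lemma summable_Tbar_summand:
  assumes "k1 \<ge> 1" "k2 \<ge> 1"
  shows "summable (Tbar_summand k1 k2)"
proof -
  define c where "c m = odd_power_sum k1 m / (2 * real m + 2) ^ k2" for m
  have nonneg: "0 \<le> c m" for m
    using odd_power_sum_ge_one[of k1 m] by (simp add: c_def)
  have "c m \<le> harm (Suc m) / (real (Suc m) + 1)" for m
  proof -
    have "real (Suc m) + 1 \<le> (2 * real m + 2) ^ 1"
      by simp
    also have "\<dots> \<le> (2 * real m + 2) ^ k2"
      using assms(2) by (intro power_increasing) auto
    finally show ?thesis
      unfolding c_def using odd_power_sum_ge_one[of k1 m] odd_power_sum_le_harm[OF assms(1), of m]
      by (intro frac_le) auto
  qed
  then have "c \<longlonglongrightarrow> 0"
    using nonneg by (intro Lim_null_comparison[OF always_eventually LIMSEQ_Suc[OF LIMSEQ_harm_divide_Suc]])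
      auto
  moreover have "Tbar_summand k1 k2 = (\<lambda>m. (-1)^m * c m)"
    by (auto simp: fun_eq_iff Tbar_summand_def c_def)
  ultimately show ?thesis
    using nonneg Tbar_summand_coefficient_decreasing[OF assms] summable_Leibniz'(1)[of c]
    by (simp add: c_def)
qed

lemma tbar_eq_suminf:
  assumes "k \<ge> 1"
  shows "tbar k = 2 ^ k * (\<Sum>i. (-1)^i / (2 * real i + 1) ^ k)"
proof -
  have "(-1)^i / (real (Suc i) - 1 / 2) ^ k = 2 ^ k * ((-1)^i / (2 * real i + 1) ^ k)" for i
  proof -
    have half: "real (Suc i) - 1 / 2 = (2 * real i + 1) / 2"
      by simp
    show ?thesis
      unfolding half by (simp add: power_divide)
  qed
  then show ?thesis
    unfolding tbar_def using suminf_mult[OF summable_alternating_odd_power[OF assms]] by simp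
qed

lemma Tbar_summands_eq_Cauchy_product:
  "(\<Sum>k1\<in>{1..<k + 1}. Tbar_summand k1 (k + 1 - k1) n) + Tbar_summand 1 k n
    = (\<Sum>i\<le>n. (-1)^(n - i) / (2 * real (n - i) + 1) * ((-1)^i / (2 * real i + 1) ^ k))"
proof -
  define y where "y = 2 * real n + 2"
  define x where "x i = 2 * real i + 1" for i
  have x_reflect: "x (n - i) = y - x i" if "i \<le> n" for i
    using that by (simp add: x_def y_def of_nat_diff)
  have "y > 0"
    by (simp add: y_def)
  have x_ne: "x i \<noteq> 0" "x i \<noteq> y" if "i \<le> n" for i
    using that by (auto simp: x_def y_def)
  have "Tbar_summand 1 k n = (-1)^n * (\<Sum>i\<le>n. 1 / (y ^ k * x (n - i)))"
    unfolding Tbar_summand_altdef y_def x_def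
    using sum.atLeastAtMost_rev[of "\<lambda>i. 1 / ((2 * real n + 2) ^ k * (2 * real i + 1))" 0 n]
    by (simp add: atLeast0AtMost)
  also have "\<dots> = (-1)^n * (\<Sum>i\<le>n. 1 / (y ^ k * (y - x i)))"
    by (simp add: x_reflect)
  finally have last: "Tbar_summand 1 k n = (-1)^n * (\<Sum>i\<le>n. 1 / (y ^ k * (y - x i)))" .
  have split: "(\<Sum>k1\<in>{1..<k + 1}. Tbar_summand k1 (k + 1 - k1) n)
      = (-1)^n * (\<Sum>i\<le>n. \<Sum>j\<in>{1..k}. 1 / (y ^ (Suc k - j) * x i ^ j))"
    unfolding Tbar_summand_altdef sum_distrib_left[symmetric] x_def y_def
      atLeastLessThanSuc_atLeastAtMost[of 1 k, unfolded Suc_eq_plus1]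
    by (subst sum.swap) simp
  have "(\<Sum>k1\<in>{1..<k + 1}. Tbar_summand k1 (k + 1 - k1) n) + Tbar_summand 1 k n
      = (-1)^n * (\<Sum>i\<le>n. (\<Sum>j\<in>{1..k}. 1 / (y ^ (Suc k - j) * x i ^ j)) + 1 / (y ^ k * (y - x i)))"
    unfolding split last by (simp add: sum.distrib distrib_left)
  also have "\<dots> = (-1)^n * (\<Sum>i\<le>n. 1 / (x i ^ k * (y - x i)))"
    using x_ne \<open>y > 0\<close>
    by (intro arg_cong[where f = "(*) _"] sum.cong refl, subst partial_fractions_power_diff) auto
  also have "\<dots> = (\<Sum>i\<le>n. (-1)^(n - i) / x (n - i) * ((-1)^i / x i ^ k))"
    unfolding sum_distrib_left
    by (intro sum.cong) (auto simp: x_reflect power_add[symmetric])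
  finally show ?thesis
    by (simp add: x_def)
qed

theorem mainTheorem14:
  fixes k :: nat
  assumes "k \<ge> 1"
  shows "W2 (k + 1) = pi / 2 ^ k * tbar k - Tbar 1 k"
proof -
  define b :: "nat \<Rightarrow> real" where "b = (\<lambda>i. (-1)^i / (2 * real i + 1) ^ k)"
  have b_bound: "\<bar>b i\<bar> \<le> 1 / (2 * real i + 1)" for i
  proof -
    have "\<bar>b i\<bar> = 1 / (2 * real i + 1) ^ k"
      by (simp add: b_def abs_mult power_abs)
    also have "\<dots> \<le> 1 / (2 * real i + 1) ^ 1"
      using assms by (intro divide_left_mono power_increasing) auto
    finally show ?thesis by simp
  qed
  have "summable b"
    unfolding b_def by (rule summable_alternating_odd_power[OF assms])
  have summable: "summable (Tbar_summand k1 (k + 1 - k1))" if "k1 \<in> {1..<k + 1}" for k1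
    using that by (intro summable_Tbar_summand) auto
  have "(\<lambda>n. (\<Sum>k1\<in>{1..<k + 1}. Tbar_summand k1 (k + 1 - k1) n) + Tbar_summand 1 k n)
      sums (pi / 4 * suminf b)"
    unfolding Tbar_summands_eq_Cauchy_product
    using Cauchy_product_pi_series_sums[OF \<open>summable b\<close> b_bound] by (simp only: b_def)
  moreover have "(\<lambda>n. (\<Sum>k1\<in>{1..<k + 1}. Tbar_summand k1 (k + 1 - k1) n) + Tbar_summand 1 k n)
      sums ((\<Sum>k1\<in>{1..<k + 1}. suminf (Tbar_summand k1 (k + 1 - k1))) + suminf (Tbar_summand 1 k))"
    using summable assms by (intro sums_add sums_sum summable_sums summable_Tbar_summand) auto
  ultimately have "W2 (k + 1) + Tbar 1 k = pi * suminf b"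
    unfolding W2_def Tbar_eq_suminf sum_distrib_left[symmetric] by (simp add: sums_iff)
  then show ?thesis
    unfolding tbar_eq_suminf[OF assms] b_def by simp
qed

end
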